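(* Let $M$ be a semiprime (or prime) right $R$-module such that $S=\mathrm{End}_R(M)$ satisfies the ascending chain condition on principal left ideals. Then the following are equivalent: (i) $M$ is a quasi-Baer module; (ii) $M$ is an endo-AIP module; (iii) $M$ is a centrally endo-AIP module.
   Context: For $N\le M$, $l_S(N)=\{\phi\in S:\phi(N)=0\}$. A fully invariant submodule $N$ of $M$ is prime in $M$ if for every ideal $T$ of $S$ and every fully invariant submodule $N'$ of $M$, $T(N')\subseteq N$ implies $T(M)\subseteq N$ or $N'\subseteq N$; $N$ is semiprime if it is an intersection of prime submodules of $M$. $M$ is a prime (semiprime) module if $\{0\}$ is prime (semiprime) in $M$. $M$ is quasi-Baer if $l_S(N)$ is a direct summand of $S$ (i.e. $l_S(N)=Se$ for an idempotent $e$) for every fully invariant submodule $N$. An ideal $I$ of $S$ is right s-unital if for every $a\in I$ there is $x\in I$ with $ax=a$, and centrally s-unital if for every $a\in I$ there is $z\in I$ central in $S$ with $az=a$. $M$ is endo-AIP (resp. centrally endo-AIP) if $l_S(N)$ is right s-unital (resp. centrally s-unital) for every fully invariant submodule $N$ of $M$. *)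

theory Defs
  imports "HOL-Algebra.Algebra"
begin

text \<open>A right R-module: an abelian group M (additive structure of a ring record; its
multiplicative fields are unused) with a right action act x r = x r.\<close>

definition right_module ::
  "('r,'a) ring_scheme \<Rightarrow> ('m,'b) ring_scheme \<Rightarrow> ('m \<Rightarrow> 'r \<Rightarrow> 'm) \<Rightarrow> bool" where
  "right_module R M act \<longleftrightarrow> ring R \<and> abelian_group M \<and>
     (\<forall>x\<in>carrier M. \<forall>r\<in>carrier R. act x r \<in> carrier M) \<and>
     (\<forall>x\<in>carrier M. \<forall>y\<in>carrier M. \<forall>r\<in>carrier R.
         act (x \<oplus>\<^bsub>M\<^esub> y) r = act x r \<oplus>\<^bsub>M\<^esub> act y r) \<and>
     (\<forall>x\<in>carrier M. \<forall>r\<in>carrier R. \<forall>s\<in>carrier R.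
         act x (r \<oplus>\<^bsub>R\<^esub> s) = act x r \<oplus>\<^bsub>M\<^esub> act x s) \<and>
     (\<forall>x\<in>carrier M. \<forall>r\<in>carrier R. \<forall>s\<in>carrier R.
         act x (r \<otimes>\<^bsub>R\<^esub> s) = act (act x r) s) \<and>
     (\<forall>x\<in>carrier M. act x \<one>\<^bsub>R\<^esub> = x)"

definition End_set ::
  "('r,'a) ring_scheme \<Rightarrow> ('m,'b) ring_scheme \<Rightarrow> ('m \<Rightarrow> 'r \<Rightarrow> 'm) \<Rightarrow> ('m \<Rightarrow> 'm) set" where
  "End_set R M act = {f. f \<in> carrier M \<rightarrow>\<^sub>E carrier M \<and>
     (\<forall>x\<in>carrier M. \<forall>y\<in>carrier M. f (x \<oplus>\<^bsub>M\<^esub> y) = f x \<oplus>\<^bsub>M\<^esub> f y) \<and>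
     (\<forall>x\<in>carrier M. \<forall>r\<in>carrier R. f (act x r) = act (f x) r)}"

definition End_ring ::
  "('r,'a) ring_scheme \<Rightarrow> ('m,'b) ring_scheme \<Rightarrow> ('m \<Rightarrow> 'r \<Rightarrow> 'm) \<Rightarrow> ('m \<Rightarrow> 'm) ring" where
  "End_ring R M act =
     \<lparr>partial_object.carrier = End_set R M act,
      monoid.mult = (\<lambda>f g. \<lambda>x\<in>carrier M. f (g x)),
      monoid.one = (\<lambda>x\<in>carrier M. x),
      ring.zero = (\<lambda>x\<in>carrier M. \<zero>\<^bsub>M\<^esub>),
      ring.add = (\<lambda>f g. \<lambda>x\<in>carrier M. f x \<oplus>\<^bsub>M\<^esub> g x)\<rparr>"

definition submodule ::
  "('r,'a) ring_scheme \<Rightarrow> ('m,'b) ring_scheme \<Rightarrow> ('m \<Rightarrow> 'r \<Rightarrow> 'm) \<Rightarrow> 'm set \<Rightarrow> bool" where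
  "submodule R M act N \<longleftrightarrow> subgroup N (add_monoid M) \<and>
     (\<forall>x\<in>N. \<forall>r\<in>carrier R. act x r \<in> N)"

definition fully_invariant ::
  "('r,'a) ring_scheme \<Rightarrow> ('m,'b) ring_scheme \<Rightarrow> ('m \<Rightarrow> 'r \<Rightarrow> 'm) \<Rightarrow> 'm set \<Rightarrow> bool" where
  "fully_invariant R M act N \<longleftrightarrow> submodule R M act N \<and>
     (\<forall>f\<in>End_set R M act. \<forall>x\<in>N. f x \<in> N)"

definition ideal_image :: "('m,'b) ring_scheme \<Rightarrow> ('m \<Rightarrow> 'm) set \<Rightarrow> 'm set \<Rightarrow> 'm set" where
  "ideal_image M T N = generate (add_monoid M) {f x | f x. f \<in> T \<and> x \<in> N}"

definition prime_in ::
  "('r,'a) ring_scheme \<Rightarrow> ('m,'b) ring_scheme \<Rightarrow> ('m \<Rightarrow> 'r \<Rightarrow> 'm) \<Rightarrow> 'm set \<Rightarrow> bool" where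
  "prime_in R M act N \<longleftrightarrow> fully_invariant R M act N \<and>
     (\<forall>T N'. ideal T (End_ring R M act) \<longrightarrow> fully_invariant R M act N' \<longrightarrow>
        ideal_image M T N' \<subseteq> N \<longrightarrow>
        ideal_image M T (carrier M) \<subseteq> N \<or> N' \<subseteq> N)"

definition semiprime_in ::
  "('r,'a) ring_scheme \<Rightarrow> ('m,'b) ring_scheme \<Rightarrow> ('m \<Rightarrow> 'r \<Rightarrow> 'm) \<Rightarrow> 'm set \<Rightarrow> bool" where
  "semiprime_in R M act N \<longleftrightarrow> fully_invariant R M act N \<and>
     (\<exists>\<P>. \<P> \<noteq> {} \<and> (\<forall>P\<in>\<P>. prime_in R M act P) \<and> N = \<Inter>\<P>)"

definition prime_module ::
  "('r,'a) ring_scheme \<Rightarrow> ('m,'b) ring_scheme \<Rightarrow> ('m \<Rightarrow> 'r \<Rightarrow> 'm) \<Rightarrow> bool" where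
  "prime_module R M act \<longleftrightarrow> prime_in R M act {\<zero>\<^bsub>M\<^esub>}"

definition semiprime_module ::
  "('r,'a) ring_scheme \<Rightarrow> ('m,'b) ring_scheme \<Rightarrow> ('m \<Rightarrow> 'r \<Rightarrow> 'm) \<Rightarrow> bool" where
  "semiprime_module R M act \<longleftrightarrow> semiprime_in R M act {\<zero>\<^bsub>M\<^esub>}"

definition l_ann ::
  "('r,'a) ring_scheme \<Rightarrow> ('m,'b) ring_scheme \<Rightarrow> ('m \<Rightarrow> 'r \<Rightarrow> 'm) \<Rightarrow> 'm set \<Rightarrow> ('m \<Rightarrow> 'm) set" where
  "l_ann R M act N = {f \<in> End_set R M act. \<forall>x\<in>N. f x = \<zero>\<^bsub>M\<^esub>}"

definition principal_left_ideal :: "('s,'c) ring_scheme \<Rightarrow> 's \<Rightarrow> 's set" where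
  "principal_left_ideal S a = {s \<otimes>\<^bsub>S\<^esub> a | s. s \<in> carrier S}"

definition acc_principal_left :: "('s,'c) ring_scheme \<Rightarrow> bool" where
  "acc_principal_left S \<longleftrightarrow>
     (\<forall>a :: nat \<Rightarrow> 's. (\<forall>n. a n \<in> carrier S) \<longrightarrow>
        (\<forall>n. principal_left_ideal S (a n) \<subseteq> principal_left_ideal S (a (Suc n))) \<longrightarrow>
        (\<exists>m. \<forall>n\<ge>m. principal_left_ideal S (a n) = principal_left_ideal S (a m)))"

definition right_s_unital :: "('s,'c) ring_scheme \<Rightarrow> 's set \<Rightarrow> bool" where
  "right_s_unital S I \<longleftrightarrow> (\<forall>a\<in>I. \<exists>x\<in>I. a \<otimes>\<^bsub>S\<^esub> x = a)"

definition centrally_s_unital :: "('s,'c) ring_scheme \<Rightarrow> 's set \<Rightarrow> bool" where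
  "centrally_s_unital S I \<longleftrightarrow>
     (\<forall>a\<in>I. \<exists>z\<in>I. (\<forall>s\<in>carrier S. z \<otimes>\<^bsub>S\<^esub> s = s \<otimes>\<^bsub>S\<^esub> z) \<and> a \<otimes>\<^bsub>S\<^esub> z = a)"

definition quasi_Baer ::
  "('r,'a) ring_scheme \<Rightarrow> ('m,'b) ring_scheme \<Rightarrow> ('m \<Rightarrow> 'r \<Rightarrow> 'm) \<Rightarrow> bool" where
  "quasi_Baer R M act \<longleftrightarrow>
     (\<forall>N. fully_invariant R M act N \<longrightarrow>
        (\<exists>e\<in>carrier (End_ring R M act).
           e \<otimes>\<^bsub>End_ring R M act\<^esub> e = e \<and>
           l_ann R M act N = principal_left_ideal (End_ring R M act) e))"

definition endo_AIP ::
  "('r,'a) ring_scheme \<Rightarrow> ('m,'b) ring_scheme \<Rightarrow> ('m \<Rightarrow> 'r \<Rightarrow> 'm) \<Rightarrow> bool" where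
  "endo_AIP R M act \<longleftrightarrow>
     (\<forall>N. fully_invariant R M act N \<longrightarrow>
        right_s_unital (End_ring R M act) (l_ann R M act N))"

definition centrally_endo_AIP ::
  "('r,'a) ring_scheme \<Rightarrow> ('m,'b) ring_scheme \<Rightarrow> ('m \<Rightarrow> 'r \<Rightarrow> 'm) \<Rightarrow> bool" where
  "centrally_endo_AIP R M act \<longleftrightarrow>
     (\<forall>N. fully_invariant R M act N \<longrightarrow>
        centrally_s_unital (End_ring R M act) (l_ann R M act N))"

end

theory Submission
  imports Defs
begin

(* The annihilator l_S(N) of a fully invariant submodule N is a two-sided ideal of S = End_R(M),
   so everything reduces to ring theory in S.  With ACC on principal left ideals, a right
   s-unital ideal I is generated by an idempotent: pick Sm maximal among the principal left
   ideals generated by elements of I; every a in I has a common right unit z in I with m, so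
   Sm is contained in Sz, maximality gives Sz = Sm, and a = az lies in Sm; a right unit of m in
   I = Sm is then an idempotent generator.  This is the equivalence of quasi-Baer and endo-AIP.
   If M is semiprime, so is S: when aSa = 0, the fully invariant submodule K = r_M(aS) is
   killed by a and contains a(M), so for every prime P in a representation of {0} as an
   intersection of primes, primeness forces a(M) into P.  In a semiprime ring an idempotent e
   generating a two-sided ideal Se is central, which upgrades right s-unitality to central
   s-unitality. *)

definition semiprime_ring :: "('a, 'b) ring_scheme \<Rightarrow> bool" where
  "semiprime_ring R \<longleftrightarrow>
     (\<forall>a\<in>carrier R. (\<forall>u\<in>carrier R. a \<otimes>\<^bsub>R\<^esub> u \<otimes>\<^bsub>R\<^esub> a = \<zero>\<^bsub>R\<^esub>) \<longrightarrow> a = \<zero>\<^bsub>R\<^esub>)"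

lemma acc_principal_left_maximal:
  assumes acc: "acc_principal_left R" and A: "A \<subseteq> carrier R" "x \<in> A"
  shows "\<exists>m\<in>A. \<forall>y\<in>A. principal_left_ideal R m \<subseteq> principal_left_ideal R y \<longrightarrow>
           principal_left_ideal R y = principal_left_ideal R m"
proof (rule ccontr)
  let ?P = "principal_left_ideal R"
  assume "\<not> ?thesis"
  then have "\<forall>y\<in>A. \<exists>y'. y' \<in> A \<and> ?P y \<subset> ?P y'" by blast
  then obtain f where f: "\<And>y. y \<in> A \<Longrightarrow> f y \<in> A \<and> ?P y \<subset> ?P (f y)"
    by metis
  define a where "a n = (f ^^ n) x" for n
  have aA: "a n \<in> A" for n by (induct n) (simp_all add: a_def A f)
  have aC: "a n \<in> carrier R" for n using aA A by blast
  have chain: "?P (a n) \<subseteq> ?P (a (Suc n))" for n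
    using f aA by (auto simp: a_def)
  obtain m where "\<forall>n\<ge>m. ?P (a n) = ?P (a m)"
    using acc[unfolded acc_principal_left_def, rule_format, of a, OF aC chain] by blast
  then have "?P (a (Suc m)) = ?P (a m)" by (metis lessI less_imp_le)
  with f[OF aA[of m]] show False by (simp add: a_def)
qed

lemma (in ideal) principal_left_ideal_subset_ideal:
  "x \<in> I \<Longrightarrow> principal_left_ideal R x \<subseteq> I"
  unfolding principal_left_ideal_def by (auto intro: I_l_closed)

context ring
begin

lemma principal_left_ideal_memI: "s \<in> carrier R \<Longrightarrow> s \<otimes> x \<in> principal_left_ideal R x"
  unfolding principal_left_ideal_def by blast

lemma principal_left_ideal_self: "x \<in> carrier R \<Longrightarrow> x \<in> principal_left_ideal R x"
  using principal_left_ideal_memI[OF one_closed, of x] by simp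

lemma principal_left_ideal_subset:
  assumes "y \<in> principal_left_ideal R x" "x \<in> carrier R"
  shows "principal_left_ideal R y \<subseteq> principal_left_ideal R x"
  using assms unfolding principal_left_ideal_def by (auto simp: m_assoc[symmetric])

lemma principal_left_ideal_idempotent_unit:
  assumes "e \<in> carrier R" "e \<otimes> e = e" "a \<in> principal_left_ideal R e"
  shows "a \<otimes> e = a"
  using assms unfolding principal_left_ideal_def by (auto simp: m_assoc)

lemma right_s_unital_common_unit:
  assumes I: "ideal I R" and u: "right_s_unital R I" and a: "a \<in> I" and b: "b \<in> I"
  shows "\<exists>z\<in>I. a \<otimes> z = a \<and> b \<otimes> z = b"
proof -
  interpret ideal I R by (rule I)
  obtain x where x: "x \<in> I" "a \<otimes> x = a" using u a unfolding right_s_unital_def by blast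
  have "b \<ominus> b \<otimes> x \<in> I" using a_subset b x by (simp add: a_minus_def I_l_closed subsetD)
  then obtain y where y: "y \<in> I" "(b \<ominus> b \<otimes> x) \<otimes> y = b \<ominus> b \<otimes> x"
    using u unfolding right_s_unital_def by blast
  have carr: "x \<in> carrier R" "y \<in> carrier R" "a \<in> carrier R" "b \<in> carrier R"
    using a_subset x y a b by auto
  \<comment> \<open>z = x + y - xy, i.e. 1 - z = (1 - x)(1 - y), is a right unit for a and b.\<close>
  let ?z = "x \<oplus> y \<ominus> x \<otimes> y"
  have "?z \<in> I" using x y carr by (simp add: a_minus_def I_l_closed)
  moreover have "a \<otimes> ?z = a"
    using x carr by (simp add: r_distr r_minus a_minus_def m_assoc[symmetric] r_neg a_assoc)
  moreover have "b \<otimes> ?z = b"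
  proof -
    have "b \<otimes> ?z = b \<otimes> x \<oplus> (b \<ominus> b \<otimes> x) \<otimes> y" using carr
      by (simp add: r_distr l_distr r_minus l_minus a_minus_def m_assoc a_assoc)
    also have "\<dots> = b" using y carr by (simp add: a_minus_def add.m_lcomm r_neg)
    finally show ?thesis .
  qed
  ultimately show ?thesis by blast
qed

lemma right_s_unital_principal_idempotent:
  assumes I: "ideal I R" and u: "right_s_unital R I" and acc: "acc_principal_left R"
  shows "\<exists>e\<in>carrier R. e \<otimes> e = e \<and> I = principal_left_ideal R e"
proof -
  let ?P = "principal_left_ideal R"
  interpret ideal I R by (rule I)
  obtain m where m: "m \<in> I" and max: "\<And>y. y \<in> I \<Longrightarrow> ?P m \<subseteq> ?P y \<Longrightarrow> ?P y = ?P m"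
    using acc_principal_left_maximal[OF acc a_subset zero_closed] by blast
  have mC: "m \<in> carrier R" using m a_subset by blast
  have "I \<subseteq> ?P m"
  proof
    fix a assume a: "a \<in> I"
    then obtain z where z: "z \<in> I" "a \<otimes> z = a" "m \<otimes> z = m"
      using right_s_unital_common_unit[OF I u a m] by blast
    have zC: "z \<in> carrier R" using z a_subset by blast
    have "m \<in> ?P z" using principal_left_ideal_memI[OF mC, of z] z(3) by simp
    then have "?P m \<subseteq> ?P z" by (rule principal_left_ideal_subset[OF _ zC])
    then have "?P z = ?P m" using max z(1) by blast
    moreover have "a \<in> ?P z" using principal_left_ideal_memI[of a z] z(2) a a_subset by auto
    ultimately show "a \<in> ?P m" by simp
  qed
  then have Im: "I = ?P m" using principal_left_ideal_subset_ideal[OF m] by blast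
  obtain e where e: "e \<in> I" "m \<otimes> e = m" using u m unfolding right_s_unital_def by blast
  obtain t where t: "t \<in> carrier R" "e = t \<otimes> m" using e(1) Im unfolding principal_left_ideal_def by blast
  have eC: "e \<in> carrier R" using e a_subset by blast
  have idem: "e \<otimes> e = e" using t e(2) mC eC by (simp add: m_assoc)
  have "m \<in> ?P e" using principal_left_ideal_memI[OF mC, of e] e(2) by simp
  then have "I = ?P e"
    using Im principal_left_ideal_subset[OF _ eC] principal_left_ideal_subset_ideal[OF e(1)] by blast
  with idem eC show ?thesis by blast
qed

lemma right_s_unital_iff_principal_idempotent:
  assumes "ideal I R" and "acc_principal_left R"
  shows "right_s_unital R I \<longleftrightarrow> (\<exists>e\<in>carrier R. e \<otimes> e = e \<and> I = principal_left_ideal R e)"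
proof
  assume "\<exists>e\<in>carrier R. e \<otimes> e = e \<and> I = principal_left_ideal R e"
  then obtain e where e: "e \<in> carrier R" "e \<otimes> e = e" and Ie: "I = principal_left_ideal R e"
    by blast
  show "right_s_unital R I"
    unfolding right_s_unital_def Ie
    using principal_left_ideal_idempotent_unit[OF e] principal_left_ideal_self[OF e(1)] by blast
qed (rule right_s_unital_principal_idempotent[OF assms(1) _ assms(2)])

lemma semiprime_idempotent_central:
  assumes sp: "semiprime_ring R" and e: "e \<in> carrier R" "e \<otimes> e = e"
    and I: "ideal (principal_left_ideal R e) R" and s: "s \<in> carrier R"
  shows "e \<otimes> s = s \<otimes> e"
proof -
  have eve: "e \<otimes> v \<otimes> e = e \<otimes> v" if v: "v \<in> carrier R" for v
    using principal_left_ideal_idempotent_unit[OF e] ideal.I_r_closed[OF I]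
      principal_left_ideal_self[OF e(1)] v by blast
  \<comment> \<open>b = s - es satisfies eRb = 0, hence (be)R(be) = 0.\<close>
  define b where "b = s \<ominus> e \<otimes> s"
  have b: "b \<in> carrier R" unfolding b_def using s e by simp
  have eub: "e \<otimes> u \<otimes> b = \<zero>" if u: "u \<in> carrier R" for u
  proof -
    have "e \<otimes> u \<otimes> b = e \<otimes> u \<otimes> s \<ominus> e \<otimes> u \<otimes> e \<otimes> s" unfolding b_def using u s e
      by (simp add: r_minus a_minus_def r_distr m_assoc)
    then show ?thesis using eve[OF u] u s e by (simp add: r_neg)
  qed
  have "b \<otimes> e \<otimes> u \<otimes> (b \<otimes> e) = \<zero>" if u: "u \<in> carrier R" for u
  proof -
    have "b \<otimes> e \<otimes> u \<otimes> (b \<otimes> e) = b \<otimes> (e \<otimes> (u \<otimes> b) \<otimes> e)" using b e u by (simp add: m_assoc)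
    also have "\<dots> = b \<otimes> (e \<otimes> u \<otimes> b)" using eve[of "u \<otimes> b"] u b e by (simp add: m_assoc)
    finally show ?thesis using eub[OF u] b by simp
  qed
  then have "b \<otimes> e = \<zero>" using sp b e unfolding semiprime_ring_def by blast
  then have "s \<otimes> e \<ominus> e \<otimes> s \<otimes> e = \<zero>"
    unfolding b_def using s e by (simp add: l_minus a_minus_def l_distr)
  then have "s \<otimes> e = e \<otimes> s \<otimes> e" using r_right_minus_eq[of "s \<otimes> e" "e \<otimes> s \<otimes> e"] s e by simp
  then show ?thesis using eve[OF s] by simp
qed

lemma centrally_s_unital_iff_right_s_unital:
  assumes sp: "semiprime_ring R" and I: "ideal I R" and acc: "acc_principal_left R"
  shows "centrally_s_unital R I \<longleftrightarrow> right_s_unital R I"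
proof
  show "centrally_s_unital R I \<Longrightarrow> right_s_unital R I"
    unfolding centrally_s_unital_def right_s_unital_def by blast
next
  assume "right_s_unital R I"
  then obtain e where e: "e \<in> carrier R" "e \<otimes> e = e" and Ie: "I = principal_left_ideal R e"
    using right_s_unital_principal_idempotent[OF I _ acc] by blast
  have central: "\<forall>s\<in>carrier R. e \<otimes> s = s \<otimes> e"
    using semiprime_idempotent_central[OF sp e] I Ie by blast
  show "centrally_s_unital R I"
    unfolding centrally_s_unital_def
  proof
    fix a assume "a \<in> I"
    then have "a \<otimes> e = a" using principal_left_ideal_idempotent_unit[OF e] Ie by blast
    moreover have "e \<in> I" using principal_left_ideal_self[OF e(1)] Ie by blast
    ultimately show "\<exists>z\<in>I. (\<forall>s\<in>carrier R. z \<otimes> s = s \<otimes> z) \<and> a \<otimes> z = a"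
      using central by blast
  qed
qed

end

lemma (in abelian_group) additive_map_abelian_group_hom:
  assumes "\<And>x. x \<in> carrier G \<Longrightarrow> f x \<in> carrier G"
    and "\<And>x y. x \<in> carrier G \<Longrightarrow> y \<in> carrier G \<Longrightarrow> f (x \<oplus> y) = f x \<oplus> f y"
  shows "abelian_group_hom G G f"
  using assms
  by (intro abelian_group_hom.intro abelian_group_hom_axioms.intro group_hom.intro
      group_hom_axioms.intro abelian_group_axioms a_group) (auto simp: hom_def)

locale right_mod =
  fixes R :: "('r, 'a) ring_scheme" and M :: "('m, 'b) ring_scheme" and act :: "'m \<Rightarrow> 'r \<Rightarrow> 'm"
  assumes right_module: "right_module R M act"
begin

sublocale M: abelian_group M
  using right_module unfolding right_module_def by blast

abbreviation S where "S \<equiv> End_ring R M act"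

lemma End_ring_simps:
  "carrier S = End_set R M act"
  "f \<otimes>\<^bsub>S\<^esub> g = (\<lambda>x\<in>carrier M. f (g x))"
  "\<one>\<^bsub>S\<^esub> = (\<lambda>x\<in>carrier M. x)"
  "\<zero>\<^bsub>S\<^esub> = (\<lambda>x\<in>carrier M. \<zero>\<^bsub>M\<^esub>)"
  "f \<oplus>\<^bsub>S\<^esub> g = (\<lambda>x\<in>carrier M. f x \<oplus>\<^bsub>M\<^esub> g x)"
  by (simp_all add: End_ring_def)

lemma End_ring_apply:
  assumes "x \<in> carrier M"
  shows "(f \<otimes>\<^bsub>S\<^esub> g) x = f (g x)" "\<one>\<^bsub>S\<^esub> x = x" "\<zero>\<^bsub>S\<^esub> x = \<zero>\<^bsub>M\<^esub>"
    "(f \<oplus>\<^bsub>S\<^esub> g) x = f x \<oplus>\<^bsub>M\<^esub> g x"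
  using assms by (simp_all add: End_ring_simps)

lemma act_closed: "x \<in> carrier M \<Longrightarrow> r \<in> carrier R \<Longrightarrow> act x r \<in> carrier M"
  using right_module unfolding right_module_def by blast

lemma act_hom: "r \<in> carrier R \<Longrightarrow> abelian_group_hom M M (\<lambda>x. act x r)"
  using right_module act_closed unfolding right_module_def
  by (intro M.additive_map_abelian_group_hom) auto

lemma End_closed: "f \<in> End_set R M act \<Longrightarrow> x \<in> carrier M \<Longrightarrow> f x \<in> carrier M"
  unfolding End_set_def by auto

lemma End_add: "f \<in> End_set R M act \<Longrightarrow> x \<in> carrier M \<Longrightarrow> y \<in> carrier M \<Longrightarrow>
    f (x \<oplus>\<^bsub>M\<^esub> y) = f x \<oplus>\<^bsub>M\<^esub> f y"
  unfolding End_set_def by auto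

lemma End_act: "f \<in> End_set R M act \<Longrightarrow> x \<in> carrier M \<Longrightarrow> r \<in> carrier R \<Longrightarrow>
    f (act x r) = act (f x) r"
  unfolding End_set_def by auto

lemma End_hom: "f \<in> End_set R M act \<Longrightarrow> abelian_group_hom M M f"
  using End_closed End_add by (intro M.additive_map_abelian_group_hom)

lemma End_eqI:
  assumes "f \<in> End_set R M act" "g \<in> End_set R M act" "\<And>x. x \<in> carrier M \<Longrightarrow> f x = g x"
  shows "f = g"
  using assms unfolding End_set_def PiE_def by (blast intro: extensionalityI)

lemma restrict_End_setI:
  assumes "\<And>x. x \<in> carrier M \<Longrightarrow> g x \<in> carrier M"
    and "\<And>x y. x \<in> carrier M \<Longrightarrow> y \<in> carrier M \<Longrightarrow> g (x \<oplus>\<^bsub>M\<^esub> y) = g x \<oplus>\<^bsub>M\<^esub> g y"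
    and "\<And>x r. x \<in> carrier M \<Longrightarrow> r \<in> carrier R \<Longrightarrow> g (act x r) = act (g x) r"
  shows "(\<lambda>x\<in>carrier M. g x) \<in> End_set R M act"
  using assms act_closed unfolding End_set_def by auto

lemma End_add_closed:
  "f \<in> End_set R M act \<Longrightarrow> g \<in> End_set R M act \<Longrightarrow> f \<oplus>\<^bsub>S\<^esub> g \<in> End_set R M act"
  unfolding End_ring_simps
  by (intro restrict_End_setI)
    (auto simp: End_closed End_add End_act M.a_ac abelian_group_hom.hom_add[OF act_hom])

lemma End_neg_closed:
  "f \<in> End_set R M act \<Longrightarrow> (\<lambda>x\<in>carrier M. \<ominus>\<^bsub>M\<^esub> f x) \<in> End_set R M act"
  by (intro restrict_End_setI)
    (auto simp: End_closed End_act abelian_group_hom.hom_add[OF End_hom] M.minus_add M.a_ac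
      abelian_group_hom.hom_a_inv[OF act_hom])

lemma End_comp_closed:
  "f \<in> End_set R M act \<Longrightarrow> g \<in> End_set R M act \<Longrightarrow> f \<otimes>\<^bsub>S\<^esub> g \<in> End_set R M act"
  unfolding End_ring_simps by (intro restrict_End_setI) (auto simp: End_closed End_add End_act)

lemma End_zero_closed: "\<zero>\<^bsub>S\<^esub> \<in> End_set R M act"
  unfolding End_ring_simps
  by (intro restrict_End_setI) (auto simp: abelian_group_hom.hom_zero[OF act_hom])

lemma End_one_closed: "\<one>\<^bsub>S\<^esub> \<in> End_set R M act"
  unfolding End_ring_simps by (intro restrict_End_setI) auto

lemma End_ring_is_ring: "ring S"
proof (rule ringI)
  show "abelian_group S"
  proof (rule abelian_groupI, unfold End_ring_simps(1))
    fix f g h assume f: "f \<in> End_set R M act" and g: "g \<in> End_set R M act"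
      and h: "h \<in> End_set R M act"
    show "f \<oplus>\<^bsub>S\<^esub> g \<in> End_set R M act" using End_add_closed[OF f g] .
    show "f \<oplus>\<^bsub>S\<^esub> g = g \<oplus>\<^bsub>S\<^esub> f"
      using f g by (auto intro!: End_eqI End_add_closed simp: End_ring_apply End_closed M.a_ac)
    show "f \<oplus>\<^bsub>S\<^esub> g \<oplus>\<^bsub>S\<^esub> h = f \<oplus>\<^bsub>S\<^esub> (g \<oplus>\<^bsub>S\<^esub> h)"
      using f g h by (auto intro!: End_eqI End_add_closed simp: End_ring_apply End_closed M.a_ac)
  next
    show "\<zero>\<^bsub>S\<^esub> \<in> End_set R M act" by (rule End_zero_closed)
  next
    fix f assume f: "f \<in> End_set R M act"
    show "\<zero>\<^bsub>S\<^esub> \<oplus>\<^bsub>S\<^esub> f = f"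
      using f by (auto intro!: End_eqI End_add_closed End_zero_closed simp: End_ring_apply End_closed)
    have "(\<lambda>x\<in>carrier M. \<ominus>\<^bsub>M\<^esub> f x) \<oplus>\<^bsub>S\<^esub> f = \<zero>\<^bsub>S\<^esub>"
      using f by (auto intro!: End_eqI End_add_closed End_neg_closed End_zero_closed
          simp: End_ring_apply End_closed M.l_neg)
    with End_neg_closed[OF f]
    show "\<exists>g\<in>End_set R M act. g \<oplus>\<^bsub>S\<^esub> f = \<zero>\<^bsub>S\<^esub>" by blast
  qed
next
  show "monoid S"
  proof (rule monoidI, unfold End_ring_simps(1))
    fix f g h assume f: "f \<in> End_set R M act" and g: "g \<in> End_set R M act"
      and h: "h \<in> End_set R M act"
    show "f \<otimes>\<^bsub>S\<^esub> g \<in> End_set R M act" using End_comp_closed[OF f g] .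
    show "f \<otimes>\<^bsub>S\<^esub> g \<otimes>\<^bsub>S\<^esub> h = f \<otimes>\<^bsub>S\<^esub> (g \<otimes>\<^bsub>S\<^esub> h)"
      using f g h by (auto intro!: End_eqI End_comp_closed simp: End_ring_apply End_closed)
  next
    show "\<one>\<^bsub>S\<^esub> \<in> End_set R M act" by (rule End_one_closed)
  next
    fix f assume f: "f \<in> End_set R M act"
    show "\<one>\<^bsub>S\<^esub> \<otimes>\<^bsub>S\<^esub> f = f" "f \<otimes>\<^bsub>S\<^esub> \<one>\<^bsub>S\<^esub> = f"
      using f by (auto intro!: End_eqI End_comp_closed End_one_closed simp: End_ring_apply End_closed)
  qed
next
  fix f g h assume "f \<in> carrier S" "g \<in> carrier S" "h \<in> carrier S"
  then show "(f \<oplus>\<^bsub>S\<^esub> g) \<otimes>\<^bsub>S\<^esub> h = f \<otimes>\<^bsub>S\<^esub> h \<oplus>\<^bsub>S\<^esub> g \<otimes>\<^bsub>S\<^esub> h"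
    and "h \<otimes>\<^bsub>S\<^esub> (f \<oplus>\<^bsub>S\<^esub> g) = h \<otimes>\<^bsub>S\<^esub> f \<oplus>\<^bsub>S\<^esub> h \<otimes>\<^bsub>S\<^esub> g"
    unfolding End_ring_simps(1)
    by (auto intro!: End_eqI End_comp_closed End_add_closed simp: End_ring_apply End_closed End_add)
qed

sublocale E: ring S by (rule End_ring_is_ring)

lemma fully_invariant_subset: "fully_invariant R M act N \<Longrightarrow> N \<subseteq> carrier M"
  unfolding fully_invariant_def submodule_def using subgroup.subset by force

lemma l_ann_ideal:
  assumes N: "fully_invariant R M act N"
  shows "ideal (l_ann R M act N) S"
proof -
  have NC: "N \<subseteq> carrier M" by (rule fully_invariant_subset[OF N])
  have l_closed: "g \<otimes>\<^bsub>S\<^esub> f \<in> l_ann R M act N" if "f \<in> l_ann R M act N" "g \<in> carrier S" for f g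
    using that NC End_comp_closed
    by (auto simp: l_ann_def End_ring_apply End_ring_simps(1) abelian_group_hom.hom_zero[OF End_hom])
  show ?thesis
  proof (rule idealI[OF End_ring_is_ring])
    show "subgroup (l_ann R M act N) (add_monoid S)"
    proof (rule E.add.subgroupI)
      show "l_ann R M act N \<subseteq> carrier S" by (auto simp: l_ann_def End_ring_simps(1))
      have "\<zero>\<^bsub>S\<^esub> \<in> l_ann R M act N"
        using NC End_zero_closed by (auto simp: l_ann_def End_ring_apply)
      then show "l_ann R M act N \<noteq> {}" by blast
    next
      fix f assume f: "f \<in> l_ann R M act N"
      then have "f \<in> carrier S" by (simp add: l_ann_def End_ring_simps(1))
      then have "\<ominus>\<^bsub>S\<^esub> f = \<ominus>\<^bsub>S\<^esub> \<one>\<^bsub>S\<^esub> \<otimes>\<^bsub>S\<^esub> f" by (simp add: E.l_minus)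
      then show "\<ominus>\<^bsub>S\<^esub> f \<in> l_ann R M act N"
        using l_closed[OF f E.a_inv_closed[OF E.one_closed]] by simp
    next
      fix f g assume "f \<in> l_ann R M act N" "g \<in> l_ann R M act N"
      then show "f \<oplus>\<^bsub>S\<^esub> g \<in> l_ann R M act N"
        using NC End_add_closed by (auto simp: l_ann_def End_ring_apply)
    qed
  next
    fix f g assume "f \<in> l_ann R M act N" "g \<in> carrier S"
    then show "g \<otimes>\<^bsub>S\<^esub> f \<in> l_ann R M act N" by (rule l_closed)
    show "f \<otimes>\<^bsub>S\<^esub> g \<in> l_ann R M act N"
      using \<open>f \<in> l_ann R M act N\<close> \<open>g \<in> carrier S\<close> N NC End_comp_closed
      by (auto simp: l_ann_def End_ring_apply End_ring_simps(1) fully_invariant_def)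
  qed
qed

definition r_ann :: "('m \<Rightarrow> 'm) set \<Rightarrow> 'm set" where
  "r_ann F = {x \<in> carrier M. \<forall>f\<in>F. f x = \<zero>\<^bsub>M\<^esub>}"

lemma r_ann_fully_invariant:
  assumes F: "F \<subseteq> carrier S" and F_closed: "\<And>f g. f \<in> F \<Longrightarrow> g \<in> carrier S \<Longrightarrow> f \<otimes>\<^bsub>S\<^esub> g \<in> F"
  shows "fully_invariant R M act (r_ann F)"
  unfolding fully_invariant_def submodule_def
proof (intro conjI ballI)
  have hom: "abelian_group_hom M M f" if "f \<in> F" for f
    using that F End_hom by (auto simp: End_ring_simps(1))
  show "subgroup (r_ann F) (add_monoid M)"
  proof (rule M.add.subgroupI)
    show "r_ann F \<subseteq> carrier M" by (auto simp: r_ann_def)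
    show "r_ann F \<noteq> {}"
      using abelian_group_hom.hom_zero[OF hom] by (auto simp: r_ann_def)
  next
    fix x assume x: "x \<in> r_ann F"
    have "f (\<ominus>\<^bsub>M\<^esub> x) = \<zero>\<^bsub>M\<^esub>" if f: "f \<in> F" for f
    proof -
      have "x \<in> carrier M" "f x = \<zero>\<^bsub>M\<^esub>" using x f by (auto simp: r_ann_def)
      then show ?thesis using abelian_group_hom.hom_a_inv[OF hom[OF f]] by simp
    qed
    then show "\<ominus>\<^bsub>M\<^esub> x \<in> r_ann F" using x by (simp add: r_ann_def)
  next
    fix x y assume x: "x \<in> r_ann F" and y: "y \<in> r_ann F"
    have "f (x \<oplus>\<^bsub>M\<^esub> y) = \<zero>\<^bsub>M\<^esub>" if f: "f \<in> F" for f
    proof -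
      have "x \<in> carrier M" "y \<in> carrier M" "f x = \<zero>\<^bsub>M\<^esub>" "f y = \<zero>\<^bsub>M\<^esub>"
        using x y f by (auto simp: r_ann_def)
      then show ?thesis using abelian_group_hom.hom_add[OF hom[OF f]] by simp
    qed
    then show "x \<oplus>\<^bsub>M\<^esub> y \<in> r_ann F" using x y by (simp add: r_ann_def)
  qed
next
  fix x r assume "x \<in> r_ann F" "r \<in> carrier R"
  then show "act x r \<in> r_ann F"
    using F act_closed End_act abelian_group_hom.hom_zero[OF act_hom]
    by (auto simp: r_ann_def End_ring_simps(1) subset_eq)
next
  fix g x assume g: "g \<in> End_set R M act" and x: "x \<in> r_ann F"
  have "f (g x) = \<zero>\<^bsub>M\<^esub>" if f: "f \<in> F" for f
  proof -
    have "f (g x) = (f \<otimes>\<^bsub>S\<^esub> g) x" using x by (simp add: r_ann_def End_ring_apply)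
    also have "\<dots> = \<zero>\<^bsub>M\<^esub>"
      using F_closed[OF f] g x unfolding r_ann_def End_ring_simps(1) by blast
    finally show ?thesis .
  qed
  then show "g x \<in> r_ann F" using g x End_closed by (simp add: r_ann_def)
qed

lemma prime_in_l_ann_image_or_subset:
  assumes P: "prime_in R M act P" and N: "fully_invariant R M act N"
  shows "ideal_image M (l_ann R M act N) (carrier M) \<subseteq> P \<or> N \<subseteq> P"
proof -
  have P_subgroup: "subgroup P (add_monoid M)"
    using P unfolding prime_in_def fully_invariant_def submodule_def by blast
  then have "\<zero>\<^bsub>M\<^esub> \<in> P" using subgroup.one_closed by force
  then have "ideal_image M (l_ann R M act N) N \<subseteq> P"
    unfolding ideal_image_def
    by (intro M.add.generate_subgroup_incl[OF _ P_subgroup]) (auto simp: l_ann_def)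
  then show ?thesis using P N l_ann_ideal[OF N] unfolding prime_in_def by blast
qed

lemma semiprime_module_End_ring_semiprime:
  assumes "semiprime_module R M act"
  shows "semiprime_ring S"
  unfolding semiprime_ring_def
proof (intro ballI impI)
  fix a assume a: "a \<in> carrier S" and aSa: "\<forall>u\<in>carrier S. a \<otimes>\<^bsub>S\<^esub> u \<otimes>\<^bsub>S\<^esub> a = \<zero>\<^bsub>S\<^esub>"
  define K where "K = r_ann {a \<otimes>\<^bsub>S\<^esub> s | s. s \<in> carrier S}"
  have K: "fully_invariant R M act K"
    unfolding K_def using a by (intro r_ann_fully_invariant) (auto simp: E.m_assoc)
  have a_ann: "a \<in> l_ann R M act K"
  proof -
    have "a x = \<zero>\<^bsub>M\<^esub>" if "x \<in> K" for x
    proof -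
      have "x \<in> carrier M" "(a \<otimes>\<^bsub>S\<^esub> \<one>\<^bsub>S\<^esub>) x = \<zero>\<^bsub>M\<^esub>"
        using that E.one_closed unfolding K_def r_ann_def by blast+
      then show ?thesis by (simp add: End_ring_apply)
    qed
    then show ?thesis using a by (simp add: l_ann_def End_ring_simps(1))
  qed
  have a_into_K: "a x \<in> K" if x: "x \<in> carrier M" for x
  proof -
    have "f (a x) = \<zero>\<^bsub>M\<^esub>" if f: "f \<in> {a \<otimes>\<^bsub>S\<^esub> s | s. s \<in> carrier S}" for f
    proof -
      obtain s where s: "s \<in> carrier S" "f = a \<otimes>\<^bsub>S\<^esub> s" using f by blast
      then have "f (a x) = (a \<otimes>\<^bsub>S\<^esub> s \<otimes>\<^bsub>S\<^esub> a) x" using x by (simp add: End_ring_apply)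
      also have "\<dots> = \<zero>\<^bsub>M\<^esub>" using aSa s x by (simp add: End_ring_apply)
      finally show ?thesis .
    qed
    moreover have "a x \<in> carrier M" using a x End_closed by (simp add: End_ring_simps(1))
    ultimately show ?thesis unfolding K_def r_ann_def by blast
  qed
  obtain \<P> where "\<forall>P\<in>\<P>. prime_in R M act P" "{\<zero>\<^bsub>M\<^esub>} = \<Inter>\<P>"
    using assms unfolding semiprime_module_def semiprime_in_def by blast
  moreover have "a x \<in> ideal_image M (l_ann R M act K) (carrier M)" if "x \<in> carrier M" for x
    unfolding ideal_image_def using a_ann that by (intro generate.incl) blast
  ultimately have "a x = \<zero>\<^bsub>M\<^esub>" if "x \<in> carrier M" for x
    using prime_in_l_ann_image_or_subset[OF _ K] a_into_K[OF that] that by blast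
  then show "a = \<zero>\<^bsub>S\<^esub>"
    using a End_zero_closed by (intro End_eqI) (auto simp: End_ring_simps(1) End_ring_apply)
qed

end

theorem proposition3p10:
  fixes R :: "('r,'a) ring_scheme" and M :: "('m,'b) ring_scheme" and act :: "'m \<Rightarrow> 'r \<Rightarrow> 'm"
  assumes "right_module R M act"
    and "semiprime_module R M act"
    and "acc_principal_left (End_ring R M act)"
  shows "(quasi_Baer R M act \<longleftrightarrow> endo_AIP R M act) \<and>
         (endo_AIP R M act \<longleftrightarrow> centrally_endo_AIP R M act)"
proof -
  interpret right_mod R M act by (rule right_mod.intro) fact
  have semiprime: "semiprime_ring (End_ring R M act)"
    by (rule semiprime_module_End_ring_semiprime) fact
  have "quasi_Baer R M act \<longleftrightarrow> endo_AIP R M act"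
    unfolding quasi_Baer_def endo_AIP_def
    using E.right_s_unital_iff_principal_idempotent[OF l_ann_ideal assms(3)] by blast
  moreover have "endo_AIP R M act \<longleftrightarrow> centrally_endo_AIP R M act"
    unfolding endo_AIP_def centrally_endo_AIP_def
    using E.centrally_s_unital_iff_right_s_unital[OF semiprime l_ann_ideal assms(3)] by blast
  ultimately show ?thesis ..
qed

end
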